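(* Let $D_1,\dots,D_n$ be growing disks with centers $p_1,\dots,p_n\in\mathbb{R}^2$ and growth rates $v_1,\dots,v_n>0$, and let $t_1,\dots,t_n$ be their elimination times (with $t_1=\infty$). Let $i\in\{2,\dots,n\}$ and let \[ j^*=\operatorname{argmin}_{j=1,\dots,i-1}\{t(i,j)\mid t(i,j)\le t_j\}. \] Then $t_i=t(i,j^* )$, i.e., the disk $D_i$ is eliminated by the disk $D_{j^*}$.
   Context: Growing prioritized disks: at time $t\ge 0$ the disk $D_i$ is the closed disk centered at $p_i$ of radius $tv_i$. The index is the priority (smaller index = higher priority). For $i\ne j$, $t(i,j)=|p_ip_j|/(v_i+v_j)$ is the time at which $D_i$ and $D_j$ would touch. Whenever two disks $D_i,D_j$ with $i<j$ touch at time $t(i,j)$ and neither has been removed before that time, $D_j$ is removed at that time while $D_i$ keeps growing. The elimination time $t_i$ is the time at which $D_i$ is removed; $D_1$ is never removed, so $t_1=\infty$. General position is assumed: all times $t(i,j)$, $i\neq j$, are pairwise distinct. *)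

theory Defs
  imports "HOL-Analysis.Analysis"
begin

(* Disks are indexed 1..n; p k is the center, v k the growth rate. *)

definition touch_time :: "(nat \<Rightarrow> real^2) \<Rightarrow> (nat \<Rightarrow> real) \<Rightarrow> nat \<Rightarrow> nat \<Rightarrow> real" where
  "touch_time p v i j = dist (p i) (p j) / (v i + v j)"

definition general_position :: "nat \<Rightarrow> (nat \<Rightarrow> real^2) \<Rightarrow> (nat \<Rightarrow> real) \<Rightarrow> bool" where
  "general_position n p v \<longleftrightarrow>
     (\<forall>i j k l. i \<in> {1..n} \<and> j \<in> {1..n} \<and> k \<in> {1..n} \<and> l \<in> {1..n} \<and>
        i \<noteq> j \<and> k \<noteq> l \<and> {i, j} \<noteq> {k, l} \<longrightarrow> touch_time p v i j \<noteq> touch_time p v k l)"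

(* te k is the elimination time of disk k (\<infinity> if never removed), as produced by the
   process: (1) whenever disks a < b touch at time t(a,b) and neither has been removed
   before that time (te a \<ge> t(a,b), te b \<ge> t(a,b)), disk b is removed at that time;
   (2) a disk is only ever removed by such an event. *)
definition elimination_times ::
  "nat \<Rightarrow> (nat \<Rightarrow> real^2) \<Rightarrow> (nat \<Rightarrow> real) \<Rightarrow> (nat \<Rightarrow> ereal) \<Rightarrow> bool" where
  "elimination_times n p v te \<longleftrightarrow>
     (\<forall>a b. 1 \<le> a \<and> a < b \<and> b \<le> n \<and>
        ereal (touch_time p v a b) \<le> te a \<and> ereal (touch_time p v a b) \<le> te b
        \<longrightarrow> te b = ereal (touch_time p v a b)) \<and>
     (\<forall>k. 1 \<le> k \<and> k \<le> n \<and> te k \<noteq> \<infinity> \<longrightarrow>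
        (\<exists>a. 1 \<le> a \<and> a < k \<and> te k = ereal (touch_time p v a k) \<and>
             ereal (touch_time p v a k) \<le> te a))"

end

theory Submission
  imports Defs
begin

text \<open>Call \<open>j < i\<close> a candidate for \<open>i\<close> if \<open>t(i,j) \<le> t\<^sub>j\<close>. Disk 1 is never removed, so it is
  always a candidate, and every candidate bounds the elimination time: \<open>t\<^sub>i \<le> t(i,j)\<close>, since
  otherwise the touching event of \<open>D\<^sub>i\<close> and \<open>D\<^sub>j\<close> would fire. Hence \<open>t\<^sub>i\<close> is finite, so \<open>D\<^sub>i\<close> is
  removed by some disk, which is again a candidate; comparing with the minimising candidate
  \<open>j\<^sup>*\<close> gives \<open>t\<^sub>i = t(i,j\<^sup>*)\<close>.\<close>

lemma touch_time_commute: "touch_time p v i j = touch_time p v j i"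
  unfolding touch_time_def by (simp add: dist_commute add.commute)

definition candidate :: "(nat \<Rightarrow> real^2) \<Rightarrow> (nat \<Rightarrow> real) \<Rightarrow> (nat \<Rightarrow> ereal) \<Rightarrow> nat \<Rightarrow> nat \<Rightarrow> bool"
  where "candidate p v te i j \<longleftrightarrow> j \<in> {1..i-1} \<and> ereal (touch_time p v i j) \<le> te j"

lemma elimination_time_first:
  assumes "elimination_times n p v te" and "1 \<le> n"
  shows "te 1 = \<infinity>"
proof (rule ccontr)
  assume "te 1 \<noteq> \<infinity>"
  then obtain a :: nat where "1 \<le> a" "a < 1"
    using assms unfolding elimination_times_def by blast
  then show False by simp
qed

lemma candidate_first:
  assumes "elimination_times n p v te" and "2 \<le> i" and "i \<le> n"
  shows "candidate p v te i 1"
  using assms elimination_time_first[OF assms(1)] unfolding candidate_def by auto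

lemma elimination_time_le_candidate:
  assumes elim: "elimination_times n p v te" and "i \<le> n" and cand: "candidate p v te i j"
  shows "te i \<le> ereal (touch_time p v i j)"
proof (rule ccontr)
  assume "\<not> te i \<le> ereal (touch_time p v i j)"
  then have "ereal (touch_time p v j i) \<le> te i" "te i \<noteq> ereal (touch_time p v j i)"
    by (simp_all add: touch_time_commute)
  moreover have "1 \<le> j" "j < i" "ereal (touch_time p v j i) \<le> te j"
    using cand unfolding candidate_def by (auto simp: touch_time_commute)
  ultimately show False
    using elim \<open>i \<le> n\<close> unfolding elimination_times_def by blast
qed

lemma elimination_time_eq_candidate:
  assumes "elimination_times n p v te" and "1 \<le> i" and "i \<le> n" and "te i \<noteq> \<infinity>"
  obtains a where "candidate p v te i a" "te i = ereal (touch_time p v i a)"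
proof -
  obtain a where "1 \<le> a" "a < i" "te i = ereal (touch_time p v a i)"
      "ereal (touch_time p v a i) \<le> te a"
    using assms unfolding elimination_times_def by blast
  then show thesis
    using that[of a] unfolding candidate_def by (simp add: touch_time_commute[of p v a i])
qed

theorem lemma1:
  fixes n :: nat and p :: "nat \<Rightarrow> real^2" and v :: "nat \<Rightarrow> real"
    and te :: "nat \<Rightarrow> ereal" and i :: nat
  assumes "\<And>k. k \<in> {1..n} \<Longrightarrow> v k > 0"
    and "general_position n p v"
    and "elimination_times n p v te"
    and "i \<in> {2..n}"
  defines "is_jstar \<equiv> \<lambda>j. j \<in> {1..i-1} \<and> ereal (touch_time p v i j) \<le> te j \<and>
             (\<forall>j' \<in> {1..i-1}. ereal (touch_time p v i j') \<le> te j' \<longrightarrow>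
                touch_time p v i j \<le> touch_time p v i j')"
  shows "(\<exists>j. is_jstar j) \<and> (\<forall>j. is_jstar j \<longrightarrow> te i = ereal (touch_time p v i j))"
proof
  have i: "2 \<le> i" "i \<le> n" using assms(4) by auto
  let ?C = "{j. candidate p v te i j}"
  have "finite ?C" "?C \<noteq> {}"
    using candidate_first[OF assms(3) i] unfolding candidate_def by auto
  define j where "j = arg_min_on (touch_time p v i) ?C"
  have "candidate p v te i j" "\<And>a. candidate p v te i a \<Longrightarrow> touch_time p v i j \<le> touch_time p v i a"
    using arg_min_if_finite[OF \<open>finite ?C\<close> \<open>?C \<noteq> {}\<close>, of "touch_time p v i"]
    unfolding j_def by (simp_all add: not_less)
  then show "\<exists>j. is_jstar j"
    unfolding is_jstar_def candidate_def by blast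
  show "\<forall>j. is_jstar j \<longrightarrow> te i = ereal (touch_time p v i j)"
  proof (intro allI impI)
    fix j assume "is_jstar j"
    then have cand: "candidate p v te i j"
      and least: "\<And>a. candidate p v te i a \<Longrightarrow> touch_time p v i j \<le> touch_time p v i a"
      unfolding is_jstar_def candidate_def by auto
    have upper: "te i \<le> ereal (touch_time p v i j)"
      using elimination_time_le_candidate[OF assms(3) i(2) cand] .
    then have "te i \<noteq> \<infinity>" by auto
    then obtain a where a: "candidate p v te i a" "te i = ereal (touch_time p v i a)"
      using elimination_time_eq_candidate[OF assms(3) _ i(2)] i(1) by (metis one_le_numeral order_trans)
    then have "touch_time p v i j \<le> touch_time p v i a" using least by blast
    with upper a(2) show "te i = ereal (touch_time p v i j)" by simp
  qed
qed

end
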